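(* Let $\mathcal{A}$ be a resolver-trim history-deterministic generalised Büchi automaton with $n_{\mathcal{A}}$ states. If there exists a deterministic Büchi automaton $\mathcal{B}$ with $n_{\mathcal{B}}$ states such that $\mathcal{L}(\mathcal{B})=\mathcal{L}(\mathcal{A})$, then $\mathcal{A}$ can be recoloured to obtain a resolver-trim history-deterministic generalised Büchi automaton recognising $\mathcal{L}(\mathcal{A})$, with $n_{\mathcal{A}}$ states and using at most $n_{\mathcal{A}}n_{\mathcal{B}}$ output colours.
   Context: An automaton is a tuple $(Q,\Sigma,q_{\mathrm{init}},\Delta,\Gamma,\mathrm{col},W)$ with finite state set, finite input alphabet $\Sigma$, initial state, transitions $\Delta\subseteq Q\times\Sigma\times Q$, output alphabet $\Gamma$, labelling $\mathrm{col}:\Delta\to\Gamma$, acceptance condition $W\subseteq\Gamma^\omega$. A run on $w=a_1a_2\cdots$ is a sequence $(q_0,a_1,q_1)(q_1,a_2,q_2)\cdots$ of transitions with $q_0=q_{\mathrm{init}}$, accepting if its label sequence is in $W$; $\mathcal{L}(\mathcal{A})$ is the set of words with an accepting run. A generalised Büchi automaton with finite output colour set $C$ has $\Gamma=2^C$ and $W=\{x : \text{every } c\in C \text{ occurs in infinitely many letters of } x\}$; a Büchi automaton is the case $|C|=1$. Deterministic: for each $(p,a)$ at most one $q$ with $(p,a,q)\in\Delta$. A resolver is a map $\sigma:\Sigma^+\to\Delta$ such that for every $w=a_0a_1\cdots$, the run $\rho_\sigma(w)=\sigma(a_0)\sigma(a_0a_1)\cdots$ is a run on $w$, accepting whenever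 $w\in\mathcal{L}(\mathcal{A})$; history-deterministic means a resolver exists. A history-deterministic automaton is resolver-trim if it has a resolver $\sigma$ such that every state $q$ is visited by some accepting run of the form $\rho_\sigma(w)$. Recolouring a generalised (co)Büchi automaton with $k'$ colours means replacing its colour set and labelling by a colour set of size $k'$ and a new labelling, keeping the same states, initial state and transitions, without changing the recognised language. *)

theory Defs
  imports Main
begin

record ('q, 'a, 'c) gba =
  states :: "'q set"
  alphabet :: "'a set"
  init :: 'q
  trans :: "('q \<times> 'a \<times> 'q) set"
  colours :: "'c set"
  col :: "'q \<times> 'a \<times> 'q \<Rightarrow> 'c set"

definition gba_wf :: "('q, 'a, 'c) gba \<Rightarrow> bool" where
  "gba_wf A \<longleftrightarrow> finite (states A) \<and> finite (alphabet A) \<and> finite (colours A)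
     \<and> init A \<in> states A
     \<and> trans A \<subseteq> states A \<times> alphabet A \<times> states A
     \<and> (\<forall>t\<in>trans A. col A t \<subseteq> colours A)"

definition infwords :: "'a set \<Rightarrow> (nat \<Rightarrow> 'a) set" where
  "infwords S = {w. \<forall>i. w i \<in> S}"

definition is_run :: "('q, 'a, 'c) gba \<Rightarrow> (nat \<Rightarrow> 'a) \<Rightarrow> (nat \<Rightarrow> 'q \<times> 'a \<times> 'q) \<Rightarrow> bool" where
  "is_run A w r \<longleftrightarrow> fst (r 0) = init A
     \<and> (\<forall>i. r i \<in> trans A \<and> fst (snd (r i)) = w i \<and> snd (snd (r i)) = fst (r (Suc i)))"

definition accepting :: "('q, 'a, 'c) gba \<Rightarrow> (nat \<Rightarrow> 'q \<times> 'a \<times> 'q) \<Rightarrow> bool" where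
  "accepting A r \<longleftrightarrow> (\<forall>c\<in>colours A. \<forall>N. \<exists>i\<ge>N. c \<in> col A (r i))"

definition lang :: "('q, 'a, 'c) gba \<Rightarrow> (nat \<Rightarrow> 'a) set" where
  "lang A = {w \<in> infwords (alphabet A). \<exists>r. is_run A w r \<and> accepting A r}"

definition is_buchi :: "('q, 'a, 'c) gba \<Rightarrow> bool" where
  "is_buchi A \<longleftrightarrow> card (colours A) = 1"

definition deterministic :: "('q, 'a, 'c) gba \<Rightarrow> bool" where
  "deterministic A \<longleftrightarrow>
     (\<forall>p a q q'. (p, a, q) \<in> trans A \<and> (p, a, q') \<in> trans A \<longrightarrow> q = q')"

text \<open>A resolver is a map from nonempty finite words to transitions; the induced run
on w uses sigma applied to the prefixes of length 1, 2, ...\<close>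
definition resolver_run :: "('a list \<Rightarrow> 'q \<times> 'a \<times> 'q) \<Rightarrow> (nat \<Rightarrow> 'a) \<Rightarrow> nat \<Rightarrow> 'q \<times> 'a \<times> 'q" where
  "resolver_run \<sigma> w i = \<sigma> (map w [0..<Suc i])"

definition is_resolver :: "('q, 'a, 'c) gba \<Rightarrow> ('a list \<Rightarrow> 'q \<times> 'a \<times> 'q) \<Rightarrow> bool" where
  "is_resolver A \<sigma> \<longleftrightarrow> (\<forall>w\<in>infwords (alphabet A).
      is_run A w (resolver_run \<sigma> w)
      \<and> (w \<in> lang A \<longrightarrow> accepting A (resolver_run \<sigma> w)))"

definition history_deterministic :: "('q, 'a, 'c) gba \<Rightarrow> bool" where
  "history_deterministic A \<longleftrightarrow> (\<exists>\<sigma>. is_resolver A \<sigma>)"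

definition resolver_trim :: "('q, 'a, 'c) gba \<Rightarrow> bool" where
  "resolver_trim A \<longleftrightarrow> (\<exists>\<sigma>. is_resolver A \<sigma> \<and>
      (\<forall>q\<in>states A. \<exists>w\<in>infwords (alphabet A).
          accepting A (resolver_run \<sigma> w) \<and> (\<exists>i. fst (resolver_run \<sigma> w i) = q)))"

definition recolour :: "('q, 'a, 'c) gba \<Rightarrow> 'd set \<Rightarrow> ('q \<times> 'a \<times> 'q \<Rightarrow> 'd set) \<Rightarrow> ('q, 'a, 'd) gba" where
  "recolour A C' col' = \<lparr>states = states A, alphabet = alphabet A, init = init A,
      trans = trans A, colours = C', col = col'\<rparr>"

end

theory Submission
  imports Defs "HOL-Library.Omega_Words_Fun"
begin

text \<open>
  Give a transition e of A the colour (q, p), for every pair of states of A and B, unless e lies on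
  a cycle of the product of A and B through (q, p) that is reachable from the initial pair and
  avoids the accepting transitions of B. An accepting run of A leaves each of these sets infinitely
  often: otherwise the cycles through its recurring transitions could be concatenated to one cycle
  collecting all colours of A, and pumping it yields a word accepted by A but not by the
  deterministic B. Conversely, let a run of A on w leave each of these sets infinitely often. Since
  A is resolver-trim, every finite run of A extends to an accepting one, so B has a run on w; if
  this run were rejecting, a pair of states recurring after its last accepting transition would
  trap the run of A in the cycle set of that pair. Hence the recolouring preserves the language and
  keeps accepting runs accepting, so the resolver of A also works for the recoloured automaton.
\<close>

section \<open>Finite and infinite paths\<close>

definition is_path :: "('s \<times> 'a \<times> 's) set \<Rightarrow> 's \<Rightarrow> ('s \<times> 'a \<times> 's) list \<Rightarrow> 's \<Rightarrow> bool" where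
  "is_path T q xs q' \<longleftrightarrow> set xs \<subseteq> T \<and> map fst xs @ [q'] = q # map (snd \<circ> snd) xs"

definition is_inf_path :: "('s \<times> 'a \<times> 's) set \<Rightarrow> 's \<Rightarrow> ('s \<times> 'a \<times> 's) word \<Rightarrow> bool" where
  "is_inf_path T q r \<longleftrightarrow> range r \<subseteq> T \<and> fst \<circ> r = q ## (snd \<circ> snd \<circ> r)"

lemma eq_build_iff: "w = a ## v \<longleftrightarrow> w 0 = a \<and> suffix 1 w = v"
  by (metis build_eq build_first One_nat_def)

lemma is_inf_path_iff:
  "is_inf_path T q r \<longleftrightarrow> fst (r 0) = q \<and> (\<forall>i. r i \<in> T \<and> snd (snd (r i)) = fst (r (Suc i)))"
  unfolding is_inf_path_def eq_build_iff by (auto simp: fun_eq_iff)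

lemma is_path_append:
  assumes "is_path T q xs q'" and "is_path T q' ys q''"
  shows "is_path T q (xs @ ys) q''"
proof -
  have "map fst (xs @ ys) @ [q''] = map fst xs @ q' # map (snd \<circ> snd) ys"
    using assms(2) by (simp add: is_path_def)
  also have "\<dots> = q # map (snd \<circ> snd) (xs @ ys)"
    using assms(1) by (simp add: is_path_def)
  finally show ?thesis
    using assms by (simp add: is_path_def)
qed

lemma is_inf_path_conc:
  assumes "is_path T q u q'" and "is_inf_path T q' r"
  shows "is_inf_path T q (u \<frown> r)"
proof -
  have "fst \<circ> u \<frown> r = (map fst u @ [q']) \<frown> (snd \<circ> snd \<circ> r)"
    using assms(2) by (simp add: is_inf_path_def)
  also have "\<dots> = q ## (snd \<circ> snd \<circ> u \<frown> r)"
    using assms(1) by (simp add: is_path_def comp_assoc[symmetric])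
  finally show ?thesis
    using assms by (simp add: is_path_def is_inf_path_def)
qed

lemma comp_iter: "w \<noteq> [] \<Longrightarrow> f \<circ> w\<^sup>\<omega> = (map f w)\<^sup>\<omega>"
  by (simp add: fun_eq_iff)

lemma iter_rotate:
  assumes "xs @ [a] = a # ys" and "xs \<noteq> []"
  shows "xs\<^sup>\<omega> = a ## ys\<^sup>\<omega>"
proof -
  obtain xs' where xs: "xs = a # xs'" and ys: "ys = xs' @ [a]"
    using assms by (cases xs) auto
  have "(a # xs')\<^sup>\<omega> (Suc i) = (xs' @ [a])\<^sup>\<omega> i" for i
    using mod_less_divisor[of "Suc (length xs')" i, unfolded less_Suc_eq]
    by (auto simp: mod_Suc nth_append simp del: mod_less_divisor)
  then show ?thesis
    unfolding xs ys eq_build_iff by (simp add: fun_eq_iff)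
qed

lemma is_inf_path_iter:
  assumes "is_path T q c q" and "c \<noteq> []"
  shows "is_inf_path T q c\<^sup>\<omega>"
proof -
  have "range c\<^sup>\<omega> \<subseteq> set c"
    using assms(2) by auto
  moreover have "(map fst c)\<^sup>\<omega> = q ## (map (snd \<circ> snd) c)\<^sup>\<omega>"
    using assms by (intro iter_rotate) (simp_all add: is_path_def)
  ultimately show ?thesis
    using assms by (auto simp: is_path_def is_inf_path_def comp_iter comp_assoc[symmetric])
qed

lemma is_inf_path_suffix: "is_inf_path T q r \<Longrightarrow> is_inf_path T (fst (r k)) (suffix k r)"
  by (simp add: is_inf_path_iff)

lemma is_inf_path_prefix: "is_inf_path T q r \<Longrightarrow> is_path T q (prefix n r) (fst (r n))"
  by (induction n) (simp_all add: is_path_def is_inf_path_iff)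

lemma is_inf_path_subsequence:
  assumes "is_inf_path T q r" and "a \<le> b"
  shows "is_path T (fst (r a)) (r[a \<rightarrow> b]) (fst (r b))"
  using is_inf_path_prefix[OF is_inf_path_suffix[OF assms(1)], of a "b - a"] assms(2)
  by (simp add: subsequence_prefix_suffix)

section \<open>Runs and acceptance\<close>

lemma is_run_iff: "is_run A w r \<longleftrightarrow> is_inf_path (trans A) (init A) r \<and> w = fst \<circ> snd \<circ> r"
  by (auto simp: is_run_def is_inf_path_iff fun_eq_iff)

lemma is_run_nth: "is_run A w r \<Longrightarrow> r i = (fst (r i), w i, fst (r (Suc i))) \<and> r i \<in> trans A"
  by (simp add: is_run_def prod_eq_iff)

lemma run_subsequence:
  assumes "is_run A w r" and "i \<le> j"
  shows "is_path (trans A) (fst (r i)) (r[i \<rightarrow> j]) (fst (r j)) \<and> map (fst \<circ> snd) (r[i \<rightarrow> j]) = w[i \<rightarrow> j]"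
  using assms is_inf_path_subsequence by (fastforce simp: is_run_iff subsequence_def)

lemma finite_range_run: "gba_wf A \<Longrightarrow> is_run A w r \<Longrightarrow> finite (range r)"
  unfolding gba_wf_def is_run_def
  by (metis finite_SigmaI finite_subset image_subsetI)

lemma run_state_in_states:
  assumes "gba_wf A" and "is_run A w r"
  shows "fst (r i) \<in> states A"
proof -
  have "r i \<in> states A \<times> alphabet A \<times> states A"
    using assms unfolding gba_wf_def is_run_def by blast
  then show ?thesis
    by auto
qed

lemma in_lang_of_run:
  assumes "gba_wf A" and "is_run A w r" and "accepting A r"
  shows "w \<in> lang A"
proof -
  have "w i \<in> alphabet A" for i
    using is_run_nth[OF assms(2), of i] assms(1) unfolding gba_wf_def by auto
  then show ?thesis
    using assms(2,3) by (auto simp: lang_def infwords_def)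
qed

lemma INFM_iff_limit: "finite (range w) \<Longrightarrow> (\<exists>\<^sub>\<infinity>i. P (w i)) \<longleftrightarrow> (\<exists>a\<in>limit w. P a)"
  using INF_limit_inter[of w "Collect P"] limit_inter_INF[of w "Collect P"] by auto

lemma accepting_iff_limit:
  assumes "finite (range r)"
  shows "accepting A r \<longleftrightarrow> colours A \<subseteq> (\<Union>t\<in>limit r. col A t)"
proof -
  have "(\<exists>\<^sub>\<infinity>i. c \<in> col A (r i)) \<longleftrightarrow> (\<exists>t\<in>limit r. c \<in> col A t)" for c
    using INFM_iff_limit[OF assms, of "\<lambda>t. c \<in> col A t"] .
  then show ?thesis
    unfolding accepting_def INFM_nat_le[symmetric] by auto
qed

definition live :: "('q, 'a, 'c) gba \<Rightarrow> bool" where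
  "live A \<longleftrightarrow> (\<forall>q\<in>states A. \<exists>w r i. is_run A w r \<and> accepting A r \<and> fst (r i) = q)"

lemma resolver_trim_imp_live: "resolver_trim A \<Longrightarrow> live A"
  unfolding resolver_trim_def live_def is_resolver_def by blast

lemma run_prefix_in_lang:
  assumes wf: "gba_wf A" and live: "live A" and r: "is_run A w r"
  shows "\<exists>w'\<in>lang A. \<forall>i<n. w' i = w i"
proof -
  have "fst (r n) \<in> states A"
    using run_state_in_states[OF wf r] .
  then obtain v rs j where rs: "is_run A v rs" "accepting A rs" and "fst (rs j) = fst (r n)"
    using live unfolding live_def by blast
  define r' where "r' = prefix n r \<frown> suffix j rs"
  have "is_inf_path (trans A) (init A) r'"
    unfolding r'_def using r rs(1) \<open>fst (rs j) = fst (r n)\<close>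
    by (metis is_inf_path_conc is_inf_path_prefix is_inf_path_suffix is_run_iff)
  then have run': "is_run A (fst \<circ> snd \<circ> r') r'"
    by (simp add: is_run_iff)
  have "limit r' = limit rs"
    by (simp add: r'_def)
  then have "accepting A r'"
    using rs finite_range_run[OF wf] run' by (metis accepting_iff_limit)
  moreover have "(fst \<circ> snd \<circ> r') i = w i" if "i < n" for i
    using that r by (simp add: r'_def subsequence_def is_run_def)
  ultimately show ?thesis
    using in_lang_of_run[OF wf run'] by blast
qed

section \<open>Runs of deterministic automata\<close>

lemma deterministic_runs_agree:
  assumes det: "deterministic A" and r: "is_run A w r" and r': "is_run A w' r'"
    and agree: "\<forall>j<n. w j = w' j" and "i < n"
  shows "r i = r' i"
proof -
  have "fst (r j) = fst (r' j)" if "j \<le> n" for j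
    using that
  proof (induction j)
    case 0
    then show ?case
      using r r' by (simp add: is_run_def)
  next
    case (Suc j)
    then show ?case
      using is_run_nth[OF r, of j] is_run_nth[OF r', of j] agree det
      unfolding deterministic_def by (metis Suc_le_lessD less_imp_le_nat)
  qed
  then show ?thesis
    using is_run_nth[OF r, of i] is_run_nth[OF r', of i] agree \<open>i < n\<close>
    by (metis Suc_leI less_imp_le_nat)
qed

lemma deterministic_run_unique:
  "deterministic A \<Longrightarrow> is_run A w r \<Longrightarrow> is_run A w r' \<Longrightarrow> r = r'"
  using deterministic_runs_agree[of A w r w r' "Suc i" i for i] by auto

lemma deterministic_run_exists:
  assumes det: "deterministic A" and prefix_runs: "\<And>n. \<exists>w' r'. is_run A w' r' \<and> (\<forall>i<n. w' i = w i)"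
  shows "\<exists>r. is_run A w r"
proof -
  obtain W R where WR: "\<And>n. is_run A (W n) (R n) \<and> (\<forall>i<n. W n i = w i)"
    using prefix_runs by metis
  \<comment> \<open>By determinism the runs R n are compatible, so their diagonal is a run on w.\<close>
  have R_agree: "R (Suc i) i = R (Suc (Suc i)) i" for i
    using WR by (intro deterministic_runs_agree[OF det, of "W (Suc i)" _ "W (Suc (Suc i))" _ "Suc i"]) auto
  have "is_run A w (\<lambda>i. R (Suc i) i)"
    unfolding is_run_def
  proof (intro conjI allI)
    show "fst (R (Suc 0) 0) = init A"
      using WR by (simp add: is_run_def)
    fix i
    show "R (Suc i) i \<in> trans A" "fst (snd (R (Suc i) i)) = w i"
      using WR[of "Suc i"] by (simp_all add: is_run_def)
    show "snd (snd (R (Suc i) i)) = fst (R (Suc (Suc i)) (Suc i))"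
      using WR[of "Suc (Suc i)"] R_agree[of i] by (simp add: is_run_def)
  qed
  then show ?thesis by blast
qed

lemma run_of_equivalent_deterministic:
  assumes "gba_wf A" and "live A" and "deterministic B" and "lang B = lang A" and "is_run A w r"
  shows "\<exists>rb. is_run B w rb"
proof (rule deterministic_run_exists[OF assms(3)])
  fix n
  obtain w' where "w' \<in> lang B" "\<forall>i<n. w' i = w i"
    using run_prefix_in_lang[OF assms(1,2,5)] assms(4) by blast
  then show "\<exists>w' r'. is_run B w' r' \<and> (\<forall>i<n. w' i = w i)"
    unfolding lang_def by blast
qed

section \<open>Rejecting cycles of the product\<close>

definition jointly_reachable :: "('q, 'a, 'c) gba \<Rightarrow> ('p, 'a, 'b) gba \<Rightarrow> 'q \<Rightarrow> 'p \<Rightarrow> bool" where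
  "jointly_reachable A B q p \<longleftrightarrow> (\<exists>u v. is_path (trans A) (init A) u q \<and> is_path (trans B) (init B) v p
      \<and> map (fst \<circ> snd) u = map (fst \<circ> snd) v)"

definition rejecting_cycle :: "('q, 'a, 'c) gba \<Rightarrow> ('p, 'a, 'b) gba \<Rightarrow> 'q \<Rightarrow> 'p
    \<Rightarrow> ('q \<times> 'a \<times> 'q) list \<Rightarrow> ('p \<times> 'a \<times> 'p) list \<Rightarrow> bool" where
  "rejecting_cycle A B q p xs ys \<longleftrightarrow> xs \<noteq> [] \<and> is_path (trans A) q xs q \<and> is_path (trans B) p ys p
      \<and> map (fst \<circ> snd) xs = map (fst \<circ> snd) ys \<and> (\<forall>t\<in>set ys. col B t \<inter> colours B = {})"

definition rejecting_cycle_trans :: "('q, 'a, 'c) gba \<Rightarrow> ('p, 'a, 'b) gba \<Rightarrow> 'q \<Rightarrow> 'p \<Rightarrow> ('q \<times> 'a \<times> 'q) set" where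
  "rejecting_cycle_trans A B q p =
     {e. jointly_reachable A B q p \<and> (\<exists>xs ys. rejecting_cycle A B q p xs ys \<and> e \<in> set xs)}"

lemma jointly_reachable_runs:
  assumes "is_run A w r" and "is_run B w rb"
  shows "jointly_reachable A B (fst (r i)) (fst (rb i))"
proof -
  have "fst (r 0) = init A" and "fst (rb 0) = init B"
    using assms by (simp_all add: is_run_def)
  then show ?thesis
    using run_subsequence[OF assms(1) le0, of i] run_subsequence[OF assms(2) le0, of i]
    unfolding jointly_reachable_def by (intro exI[of _ "prefix i r"] exI[of _ "prefix i rb"]) simp
qed

lemma rejecting_cycle_runs:
  assumes "is_run A w r" and "is_run B w rb" and "i < j"
    and "fst (r j) = fst (r i)" and "fst (rb j) = fst (rb i)"
    and "\<forall>k\<in>{i..<j}. col B (rb k) \<inter> colours B = {}"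
  shows "rejecting_cycle A B (fst (r i)) (fst (rb i)) (r[i \<rightarrow> j]) (rb[i \<rightarrow> j])"
  using run_subsequence[OF assms(1), of i j] run_subsequence[OF assms(2), of i j] assms(3-6)
  unfolding rejecting_cycle_def by auto

lemma rejecting_cycle_append:
  "rejecting_cycle A B q p xs ys \<Longrightarrow> rejecting_cycle A B q p xs' ys'
    \<Longrightarrow> rejecting_cycle A B q p (xs @ xs') (ys @ ys')"
  unfolding rejecting_cycle_def by (auto intro: is_path_append)

lemma rejecting_cycle_through:
  assumes "finite E" and "E \<noteq> {}"
    and "\<And>e. e \<in> E \<Longrightarrow> \<exists>xs ys. rejecting_cycle A B q p xs ys \<and> e \<in> set xs"
  shows "\<exists>xs ys. rejecting_cycle A B q p xs ys \<and> E \<subseteq> set xs"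
  using assms
proof (induction E rule: finite_ne_induct)
  case (singleton e)
  then show ?case by auto
next
  case (insert e E)
  then obtain xs ys xs' ys' where "rejecting_cycle A B q p xs ys" "e \<in> set xs"
    and "rejecting_cycle A B q p xs' ys'" "E \<subseteq> set xs'"
    by (metis insertCI)
  then show ?case
    using rejecting_cycle_append by fastforce
qed

lemma no_accepting_rejecting_cycle:
  assumes wfA: "gba_wf A" and wfB: "gba_wf B" and det: "deterministic B" and "colours B \<noteq> {}"
    and lang: "lang B = lang A"
    and "jointly_reachable A B q p" and cycle: "rejecting_cycle A B q p xs ys"
    and covering: "colours A \<subseteq> (\<Union>t\<in>set xs. col A t)"
  shows False
proof -
  obtain u v where u: "is_path (trans A) (init A) u q" and v: "is_path (trans B) (init B) v p"
    and uv: "map (fst \<circ> snd) u = map (fst \<circ> snd) v"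
    using \<open>jointly_reachable A B q p\<close> unfolding jointly_reachable_def by blast
  have "xs \<noteq> []" and xsys: "map (fst \<circ> snd) xs = map (fst \<circ> snd) ys"
    using cycle unfolding rejecting_cycle_def by simp_all
  then have "ys \<noteq> []"
    by auto
  define ra where "ra = u \<frown> xs\<^sup>\<omega>"
  define rb where "rb = v \<frown> ys\<^sup>\<omega>"
  define w where "w = fst \<circ> snd \<circ> ra"
  have "is_inf_path (trans A) q xs\<^sup>\<omega>" and "is_inf_path (trans B) p ys\<^sup>\<omega>"
    using cycle \<open>xs \<noteq> []\<close> \<open>ys \<noteq> []\<close> by (simp_all add: rejecting_cycle_def is_inf_path_iter)
  then have "is_inf_path (trans A) (init A) ra" and "is_inf_path (trans B) (init B) rb"
    unfolding ra_def rb_def by (simp_all add: is_inf_path_conc[OF u] is_inf_path_conc[OF v])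
  moreover have "fst \<circ> snd \<circ> rb = w"
    using \<open>xs \<noteq> []\<close> \<open>ys \<noteq> []\<close> by (simp add: w_def ra_def rb_def comp_iter uv xsys)
  ultimately have run_ra: "is_run A w ra" and run_rb: "is_run B w rb"
    by (simp_all add: is_run_iff w_def)
  have "accepting A ra"
    using covering finite_range_run[OF wfA run_ra] \<open>xs \<noteq> []\<close>
    by (simp add: accepting_iff_limit ra_def)
  then have "w \<in> lang B"
    using in_lang_of_run[OF wfA run_ra] lang by simp
  then obtain rb' where "is_run B w rb'" and "accepting B rb'"
    unfolding lang_def by blast
  then have "accepting B rb"
    using deterministic_run_unique[OF det _ run_rb] by blast
  then have "colours B \<subseteq> (\<Union>t\<in>set ys. col B t)"
    using finite_range_run[OF wfB run_rb] \<open>ys \<noteq> []\<close> by (simp add: accepting_iff_limit rb_def)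
  then show False
    using cycle \<open>colours B \<noteq> {}\<close> unfolding rejecting_cycle_def by blast
qed

lemma accepting_run_leaves_rejecting_cycles:
  assumes wfA: "gba_wf A" and "gba_wf B" and "deterministic B" and "colours B \<noteq> {}"
    and "lang B = lang A" and run: "is_run A w r" and acc: "accepting A r"
  shows "\<not> limit r \<subseteq> rejecting_cycle_trans A B q p"
proof
  assume in_cycles: "limit r \<subseteq> rejecting_cycle_trans A B q p"
  have fin: "finite (range r)"
    using finite_range_run[OF wfA run] .
  then obtain e where "e \<in> limit r"
    using limit_nonempty by metis
  have cycles: "\<exists>xs ys. rejecting_cycle A B q p xs ys \<and> t \<in> set xs" if "t \<in> limit r" for t
    using in_cycles that unfolding rejecting_cycle_trans_def by blast
  obtain xs ys where cycle: "rejecting_cycle A B q p xs ys" and "limit r \<subseteq> set xs"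
    using rejecting_cycle_through[OF finite_subset[OF limit_in_range fin] _ cycles] \<open>e \<in> limit r\<close>
    by blast
  have "jointly_reachable A B q p"
    using in_cycles \<open>e \<in> limit r\<close> unfolding rejecting_cycle_trans_def by auto
  moreover have "colours A \<subseteq> (\<Union>t\<in>set xs. col A t)"
    using acc \<open>limit r \<subseteq> set xs\<close> by (auto simp: accepting_iff_limit[OF fin])
  ultimately show False
    using no_accepting_rejecting_cycle[OF assms(1-5) _ cycle] by blast
qed

lemma rejecting_run_in_rejecting_cycles:
  assumes wfA: "gba_wf A" and wfB: "gba_wf B" and buchi: "colours B = {cb}"
    and r: "is_run A w r" and rb: "is_run B w rb" and rejecting: "\<not> accepting B rb"
  shows "\<exists>q\<in>states A. \<exists>p\<in>states B. limit r \<subseteq> rejecting_cycle_trans A B q p"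
proof -
  have fin: "finite (range rb)"
    using finite_range_run[OF wfB rb] .
  obtain k where k: "limit rb = range (suffix k rb)"
    using limit_is_suffix[OF fin] by blast
  have no_colour: "col B t \<inter> colours B = {}" if "t \<in> limit rb" for t
    using rejecting that unfolding accepting_iff_limit[OF fin] buchi by blast
  have quiet: "col B (rb i) \<inter> colours B = {}" if "k \<le> i" for i
  proof -
    have "rb i = suffix k rb (i - k)"
      using that by simp
    then show ?thesis
      using no_colour k by (metis rangeI)
  qed
  define s where "s i = (fst (r i), fst (rb i))" for i
  have s_states: "s i \<in> states A \<times> states B" for i
    using run_state_in_states[OF wfA r] run_state_in_states[OF wfB rb] by (simp add: s_def)
  then have "finite (range s)"
    using wfA wfB unfolding gba_wf_def by (metis finite_SigmaI finite_subset image_subsetI)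
  then obtain q p where qp: "(q, p) \<in> limit s"
    using limit_nonempty by fastforce
  then obtain i0 where "k \<le> i0" and "s i0 = (q, p)"
    using limit_subset[of s k] by auto
  then have "q \<in> states A" and "p \<in> states B"
    using s_states[of i0] by auto
  have "r i \<in> rejecting_cycle_trans A B q p" if "i0 \<le> i" for i
  proof -
    obtain j where "i < j" and "s j = (q, p)"
      using qp by (auto simp: limit_iff_frequent INFM_nat)
    then have "rejecting_cycle A B q p (r[i0 \<rightarrow> j]) (rb[i0 \<rightarrow> j])"
      using rejecting_cycle_runs[OF r rb, of i0 j] quiet \<open>k \<le> i0\<close> \<open>s i0 = (q, p)\<close> that
      unfolding s_def by auto
    moreover have "jointly_reachable A B q p"
      using jointly_reachable_runs[OF r rb, of i0] \<open>s i0 = (q, p)\<close> unfolding s_def by simp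
    moreover have "r i \<in> set (r[i0 \<rightarrow> j])"
      using that \<open>i < j\<close> by simp
    ultimately show ?thesis
      unfolding rejecting_cycle_trans_def by blast
  qed
  then have "limit r \<subseteq> rejecting_cycle_trans A B q p"
    using limit_subset[of r i0] by auto
  then show ?thesis
    using \<open>q \<in> states A\<close> \<open>p \<in> states B\<close> by blast
qed

lemma run_leaving_rejecting_cycles_in_lang:
  assumes wfA: "gba_wf A" and wfB: "gba_wf B" and "live A" and "deterministic B"
    and buchi: "colours B = {cb}" and lang: "lang B = lang A" and r: "is_run A w r"
    and leaving: "\<And>q p. q \<in> states A \<Longrightarrow> p \<in> states B \<Longrightarrow> \<not> limit r \<subseteq> rejecting_cycle_trans A B q p"
  shows "w \<in> lang A"
proof -
  obtain rb where rb: "is_run B w rb"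
    using run_of_equivalent_deterministic[OF wfA \<open>live A\<close> \<open>deterministic B\<close> lang r] by blast
  have "accepting B rb"
  proof (rule ccontr)
    assume "\<not> accepting B rb"
    then show False
      using rejecting_run_in_rejecting_cycles[OF wfA wfB buchi r rb] leaving by metis
  qed
  then show ?thesis
    using in_lang_of_run[OF wfB rb] lang by simp
qed

section \<open>Recolouring\<close>

lemma recolour_simps [simp]:
  "states (recolour A C c) = states A" "alphabet (recolour A C c) = alphabet A"
  "init (recolour A C c) = init A" "trans (recolour A C c) = trans A"
  "colours (recolour A C c) = C" "col (recolour A C c) = c"
  by (simp_all add: recolour_def)

lemma is_run_recolour [simp]: "is_run (recolour A C c) = is_run A"
  by (simp add: fun_eq_iff is_run_def)

lemma accepting_recolour_inj_image:
  assumes "inj_on g S" and "finite (range r)"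
  shows "accepting (recolour A (g ` S) (\<lambda>e. g ` {x \<in> S. P x e})) r \<longleftrightarrow> (\<forall>x\<in>S. \<exists>t\<in>limit r. P x t)"
proof -
  have "g x \<in> g ` {x \<in> S. P x t} \<longleftrightarrow> P x t" if "x \<in> S" for x t
    using inj_on_image_mem_iff[OF assms(1) that, of "{x \<in> S. P x t}"] that by auto
  then show ?thesis
    unfolding accepting_iff_limit[OF assms(2)] recolour_simps image_subset_iff UN_iff by simp
qed

lemma lang_recolour_eq:
  assumes "\<And>w r. is_run A w r \<Longrightarrow> accepting A r \<Longrightarrow> accepting (recolour A C c) r"
    and "\<And>w r. is_run A w r \<Longrightarrow> accepting (recolour A C c) r \<Longrightarrow> w \<in> lang A"
  shows "lang (recolour A C c) = lang A"
  using assms unfolding lang_def by auto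

lemma resolver_trim_recolour:
  assumes complete: "\<And>w r. is_run A w r \<Longrightarrow> accepting A r \<Longrightarrow> accepting (recolour A C c) r"
    and lang: "lang (recolour A C c) = lang A" and "resolver_trim A"
  shows "resolver_trim (recolour A C c)"
proof -
  obtain \<sigma> where res: "is_resolver A \<sigma>" and trim: "\<forall>q\<in>states A. \<exists>w\<in>infwords (alphabet A).
      accepting A (resolver_run \<sigma> w) \<and> (\<exists>i. fst (resolver_run \<sigma> w i) = q)"
    using \<open>resolver_trim A\<close> unfolding resolver_trim_def by blast
  have complete_\<sigma>: "accepting (recolour A C c) (resolver_run \<sigma> w)"
    if "w \<in> infwords (alphabet A)" and "accepting A (resolver_run \<sigma> w)" for w
    using res that complete unfolding is_resolver_def by blast
  have "is_resolver (recolour A C c) \<sigma>"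
    unfolding is_resolver_def
  proof (intro ballI conjI impI)
    fix w
    assume w: "w \<in> infwords (alphabet (recolour A C c))"
    then show "is_run (recolour A C c) w (resolver_run \<sigma> w)"
      using res by (simp add: is_resolver_def)
    assume "w \<in> lang (recolour A C c)"
    then show "accepting (recolour A C c) (resolver_run \<sigma> w)"
      using complete_\<sigma> res w lang by (simp add: is_resolver_def)
  qed
  then show ?thesis
    using trim complete_\<sigma> unfolding resolver_trim_def recolour_simps by blast
qed

definition rejecting_cycle_colouring ::
    "('q, 'a, 'c) gba \<Rightarrow> ('p, 'a, 'b) gba \<Rightarrow> ('q \<times> 'p \<Rightarrow> 'd) \<Rightarrow> 'q \<times> 'a \<times> 'q \<Rightarrow> 'd set" where
  "rejecting_cycle_colouring A B g e =
     g ` {x \<in> states A \<times> states B. e \<notin> rejecting_cycle_trans A B (fst x) (snd x)}"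

lemma accepting_rejecting_cycle_colouring:
  assumes "gba_wf A" and "inj_on g (states A \<times> states B)" and "is_run A w r"
  shows "accepting (recolour A (g ` (states A \<times> states B)) (rejecting_cycle_colouring A B g)) r
    \<longleftrightarrow> (\<forall>q\<in>states A. \<forall>p\<in>states B. \<not> limit r \<subseteq> rejecting_cycle_trans A B q p)"
proof -
  have "accepting (recolour A (g ` (states A \<times> states B)) (rejecting_cycle_colouring A B g)) r
      \<longleftrightarrow> (\<forall>x\<in>states A \<times> states B. \<exists>t\<in>limit r. t \<notin> rejecting_cycle_trans A B (fst x) (snd x))"
    using accepting_recolour_inj_image[OF assms(2) finite_range_run[OF assms(1,3)]]
    unfolding rejecting_cycle_colouring_def .
  also have "\<dots> \<longleftrightarrow> (\<forall>q\<in>states A. \<forall>p\<in>states B. \<not> limit r \<subseteq> rejecting_cycle_trans A B q p)"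
    by auto
  finally show ?thesis .
qed

theorem lemma42:
  fixes A :: "('q, 'a, 'c) gba" and B :: "('p, 'a, 'b) gba"
  assumes "gba_wf A" and "history_deterministic A" and "resolver_trim A"
    and "gba_wf B" and "is_buchi B" and "deterministic B"
    and "alphabet B = alphabet A" and "lang B = lang A"
  shows "\<exists>(C' :: nat set) col'.
           finite C' \<and> card C' \<le> card (states A) * card (states B)
           \<and> gba_wf (recolour A C' col')
           \<and> lang (recolour A C' col') = lang A
           \<and> history_deterministic (recolour A C' col')
           \<and> resolver_trim (recolour A C' col')"
proof -
  obtain cb where buchi: "colours B = {cb}"
    using \<open>is_buchi B\<close> unfolding is_buchi_def by (rule card_1_singletonE)
  have fin: "finite (states A \<times> states B)"
    using \<open>gba_wf A\<close> \<open>gba_wf B\<close> unfolding gba_wf_def by simp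
  then obtain g :: "'q \<times> 'p \<Rightarrow> nat" where g: "inj_on g (states A \<times> states B)"
    using finite_imp_inj_to_nat_seg by blast
  let ?A' = "recolour A (g ` (states A \<times> states B)) (rejecting_cycle_colouring A B g)"
  note accepting' = accepting_rejecting_cycle_colouring[OF assms(1) g]
  have complete: "accepting ?A' r" if "is_run A w r" and "accepting A r" for w r
    using accepting'[OF that(1)] buchi
      accepting_run_leaves_rejecting_cycles[OF assms(1,4,6) _ assms(8) that] by simp
  have sound: "w \<in> lang A" if "is_run A w r" and "accepting ?A' r" for w r
    using that accepting'[OF that(1)] run_leaving_rejecting_cycles_in_lang[OF assms(1,4)
        resolver_trim_imp_live[OF assms(3)] assms(6) buchi assms(8) that(1)] by simp
  have lang': "lang ?A' = lang A"
    using lang_recolour_eq[OF complete sound] .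
  have "resolver_trim ?A'"
    using resolver_trim_recolour[OF complete lang' assms(3)] .
  moreover have "gba_wf ?A'"
    using \<open>gba_wf A\<close> fin unfolding gba_wf_def rejecting_cycle_colouring_def by auto
  moreover have "card (g ` (states A \<times> states B)) \<le> card (states A) * card (states B)"
    using card_image_le[OF fin] by (simp add: card_cartesian_product)
  ultimately show ?thesis
    using fin lang' unfolding history_deterministic_def resolver_trim_def by blast
qed

end
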